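(* Let $\overrightarrow{W}$ be a Morse sequence on a simplicial complex $K$, with reference map $\curlywedge$ and coreference map $\curlyvee$. (1) If $z,z'\in Z_p(K)$ satisfy $\curlywedge(z)=\curlywedge(z')$ and $z,z'\subseteq W^+_p$, then $z=z'$. (2) If $z,z'\in Z^p(K)$ satisfy $\curlyvee(z)=\curlyvee(z')$ and $z,z'\subseteq K\setminus W^-_p$, then $z=z'$.
   Context: A simplicial complex $K$ is a finite collection of non-empty finite sets closed under taking non-empty subsets; $\dim\sigma=|\sigma|-1$, $K^{(p)}$ the set of $p$-simplices. A pair $(\sigma,\tau)$ with $\sigma\subsetneq\tau$ is a free pair for $K$ if $\tau$ is the only simplex other than $\sigma$ containing $\sigma$; $K$ is then an elementary expansion of $K\setminus\{\sigma,\tau\}$. If $\nu$ is a facet (maximal simplex) of $K$, $K$ is an elementary filling of $K\setminus\{\nu\}$. A Morse sequence on $K$ is a sequence $\langle\emptyset=K_0,\dots,K_k=K\rangle$ with each $K_i$ an elementary expansion or filling of $K_{i-1}$; simplices added by fillings are critical; for an expansion $K_i=K_{i-1}\cup\{\sigma,\tau\}$, $\sigma\subset\tau$, $(\sigma,\tau)$ is a regular pair, $\sigma$ lower regular, $\tau$ upper regular; $\widehat W,\underline W,\overline W$ denote the sets of critical, lower regular and upper regular simplices. $K[p]$ is the $\mathbb{Z}_2$-vector space of subsets of $K^{(p)}$ (sum = symmetric difference, $0=\emptyset$). For $\sigma\in K^{(p)}$, $\partial(\sigma)=\{\tau\in K^{(p-1)}:\tau\subset\sigma\}$, $\delta(\sigma)=\{\tau\in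 K^{(p+1)}:\sigma\subset\tau\}$, extended linearly; $Z_p(K)=\ker(\partial:K[p]\to K[p-1])$ (cycles) and $Z^p(K)=\ker(\delta:K[p]\to K[p+1])$ (cocycles). The reference map $\curlywedge$ is the unique map assigning to each $p$-simplex a set of critical $p$-simplices, extended linearly (mod 2), with $\curlywedge(\nu)=\{\nu\}$ for critical $\nu$ and $\curlywedge(\tau)=0=\curlywedge(\partial(\tau))$ for upper regular $\tau$; the coreference map $\curlyvee$ is the unique such map with $\curlyvee(\nu)=\{\nu\}$ for critical $\nu$ and $\curlyvee(\sigma)=0=\curlyvee(\delta(\sigma))$ for lower regular $\sigma$. Skeletons: $W^-_p=\{\nu\in\overline W:\dim\nu\le p\}\cup\{\nu\in\widehat W\cup\underline W:\dim\nu\le p-1\}$, $W^+_p=\{\nu\in\widehat W\cup\overline W:\dim\nu\le p\}\cup\{\nu\in\underline W:\dim\nu\le p-1\}$. *)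

theory Defs
  imports Main
begin

definition simplicial_complex :: "'v set set \<Rightarrow> bool" where
  "simplicial_complex K \<longleftrightarrow> finite K \<and>
     (\<forall>\<sigma>\<in>K. \<sigma> \<noteq> {} \<and> finite \<sigma>) \<and>
     (\<forall>\<sigma>\<in>K. \<forall>\<tau>. \<tau> \<noteq> {} \<and> \<tau> \<subseteq> \<sigma> \<longrightarrow> \<tau> \<in> K)"

definition sdim :: "'v set \<Rightarrow> int" where
  "sdim \<sigma> = int (card \<sigma>) - 1"

definition simplices :: "'v set set \<Rightarrow> int \<Rightarrow> 'v set set" where
  "simplices K p = {\<sigma>\<in>K. sdim \<sigma> = p}"

definition free_pair :: "'v set set \<Rightarrow> 'v set \<Rightarrow> 'v set \<Rightarrow> bool" where
  "free_pair K \<sigma> \<tau> \<longleftrightarrow> \<sigma> \<in> K \<and> \<tau> \<in> K \<and> \<sigma> \<subset> \<tau> \<and>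
     (\<forall>\<rho>\<in>K. \<sigma> \<subseteq> \<rho> \<longrightarrow> \<rho> = \<sigma> \<or> \<rho> = \<tau>)"

definition facet :: "'v set set \<Rightarrow> 'v set \<Rightarrow> bool" where
  "facet K \<nu> \<longleftrightarrow> \<nu> \<in> K \<and> (\<forall>\<rho>\<in>K. \<nu> \<subseteq> \<rho> \<longrightarrow> \<rho> = \<nu>)"

definition elem_expansion :: "'v set set \<Rightarrow> 'v set set \<Rightarrow> 'v set \<Rightarrow> 'v set \<Rightarrow> bool" where
  "elem_expansion K K' \<sigma> \<tau> \<longleftrightarrow> simplicial_complex K' \<and> free_pair K' \<sigma> \<tau> \<and> K = K' - {\<sigma>, \<tau>}"

definition elem_filling :: "'v set set \<Rightarrow> 'v set set \<Rightarrow> 'v set \<Rightarrow> bool" where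
  "elem_filling K K' \<nu> \<longleftrightarrow> simplicial_complex K' \<and> facet K' \<nu> \<and> K = K' - {\<nu>}"

definition morse_sequence :: "'v set set \<Rightarrow> 'v set set list \<Rightarrow> bool" where
  "morse_sequence K Ks \<longleftrightarrow> Ks \<noteq> [] \<and> hd Ks = {} \<and> last Ks = K \<and>
     (\<forall>i < length Ks - 1.
        (\<exists>\<nu>. elem_filling (Ks ! i) (Ks ! Suc i) \<nu>) \<or>
        (\<exists>\<sigma> \<tau>. elem_expansion (Ks ! i) (Ks ! Suc i) \<sigma> \<tau>))"

definition critical :: "'v set set list \<Rightarrow> 'v set set" where
  "critical Ks = {\<nu>. \<exists>i < length Ks - 1. elem_filling (Ks ! i) (Ks ! Suc i) \<nu>}"

definition lower_regular :: "'v set set list \<Rightarrow> 'v set set" where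
  "lower_regular Ks = {\<sigma>. \<exists>i < length Ks - 1. \<exists>\<tau>. elem_expansion (Ks ! i) (Ks ! Suc i) \<sigma> \<tau>}"

definition upper_regular :: "'v set set list \<Rightarrow> 'v set set" where
  "upper_regular Ks = {\<tau>. \<exists>i < length Ks - 1. \<exists>\<sigma>. elem_expansion (Ks ! i) (Ks ! Suc i) \<sigma> \<tau>}"

text \<open>Linear (mod 2) extension of a map on simplices to chains (finite sets of simplices).\<close>
definition lin_ext :: "('v set \<Rightarrow> 'v set set) \<Rightarrow> 'v set set \<Rightarrow> 'v set set" where
  "lin_ext f c = {\<nu>. odd (card {\<sigma>\<in>c. \<nu> \<in> f \<sigma>})}"

definition bdry :: "'v set set \<Rightarrow> 'v set \<Rightarrow> 'v set set" where
  "bdry K \<sigma> = {\<tau>\<in>K. \<tau> \<subset> \<sigma> \<and> sdim \<tau> = sdim \<sigma> - 1}"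

definition cobdry :: "'v set set \<Rightarrow> 'v set \<Rightarrow> 'v set set" where
  "cobdry K \<sigma> = {\<tau>\<in>K. \<sigma> \<subset> \<tau> \<and> sdim \<tau> = sdim \<sigma> + 1}"

definition cycles :: "'v set set \<Rightarrow> int \<Rightarrow> 'v set set set" where
  "cycles K p = {z. z \<subseteq> simplices K p \<and> lin_ext (bdry K) z = {}}"

definition cocycles :: "'v set set \<Rightarrow> int \<Rightarrow> 'v set set set" where
  "cocycles K p = {z. z \<subseteq> simplices K p \<and> lin_ext (cobdry K) z = {}}"

definition is_reference_map :: "'v set set \<Rightarrow> 'v set set list \<Rightarrow> ('v set \<Rightarrow> 'v set set) \<Rightarrow> bool" where
  "is_reference_map K Ks f \<longleftrightarrow>
     (\<forall>\<sigma>\<in>K. f \<sigma> \<subseteq> critical Ks \<inter> simplices K (sdim \<sigma>)) \<and>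
     (\<forall>\<nu>\<in>critical Ks. f \<nu> = {\<nu>}) \<and>
     (\<forall>\<tau>\<in>upper_regular Ks. f \<tau> = {} \<and> lin_ext f (bdry K \<tau>) = {})"

definition is_coreference_map :: "'v set set \<Rightarrow> 'v set set list \<Rightarrow> ('v set \<Rightarrow> 'v set set) \<Rightarrow> bool" where
  "is_coreference_map K Ks g \<longleftrightarrow>
     (\<forall>\<sigma>\<in>K. g \<sigma> \<subseteq> critical Ks \<inter> simplices K (sdim \<sigma>)) \<and>
     (\<forall>\<nu>\<in>critical Ks. g \<nu> = {\<nu>}) \<and>
     (\<forall>\<sigma>\<in>lower_regular Ks. g \<sigma> = {} \<and> lin_ext g (cobdry K \<sigma>) = {})"

definition W_minus :: "'v set set list \<Rightarrow> int \<Rightarrow> 'v set set" where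
  "W_minus Ks p = {\<nu>\<in>upper_regular Ks. sdim \<nu> \<le> p} \<union>
                  {\<nu>\<in>critical Ks \<union> lower_regular Ks. sdim \<nu> \<le> p - 1}"

definition W_plus :: "'v set set list \<Rightarrow> int \<Rightarrow> 'v set set" where
  "W_plus Ks p = {\<nu>\<in>critical Ks \<union> upper_regular Ks. sdim \<nu> \<le> p} \<union>
                 {\<nu>\<in>lower_regular Ks. sdim \<nu> \<le> p - 1}"

end

theory Submission
  imports Defs
begin

text \<open>
  Both parts are uniqueness statements for linear maps over \<open>\<int>\<^sub>2\<close>, so it suffices to show that a
  (co)cycle \<open>c = z + z'\<close> in the kernel of the (co)reference map is zero. On the \<open>p\<close>-simplices of
  \<open>W\<^sup>+\<^sub>p\<close>, which are critical or upper regular, \<open>\<curlywedge>\<close> is the projection onto the critical ones, so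
  \<open>c\<close> consists of upper regular simplices, and no nonempty chain of those is a cycle. Dually,
  outside \<open>W\<^sup>-\<^sub>p\<close> the \<open>p\<close>-simplices are critical or lower regular, and no nonempty chain of lower
  regular simplices is a cocycle.
\<close>

lemma odd_card_sym_diff:
  assumes "finite X" "finite Y"
  shows "odd (card (sym_diff X Y)) \<longleftrightarrow> odd (card X) \<noteq> odd (card Y)"
proof -
  have "X \<union> Y = sym_diff X Y \<union> (X \<inter> Y)" by blast
  also have "card \<dots> = card (sym_diff X Y) + card (X \<inter> Y)"
    using assms by (intro card_Un_disjoint) auto
  finally have "card X + card Y = card (sym_diff X Y) + 2 * card (X \<inter> Y)"
    using card_Un_Int[OF assms] by simp
  then show ?thesis by presburger
qed

lemma lin_ext_sym_diff:
  assumes "finite A" "finite B"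
  shows "lin_ext h (sym_diff A B) = sym_diff (lin_ext h A) (lin_ext h B)"
proof -
  have "{\<sigma> \<in> sym_diff A B. \<nu> \<in> h \<sigma>} = sym_diff {\<sigma>\<in>A. \<nu> \<in> h \<sigma>} {\<sigma>\<in>B. \<nu> \<in> h \<sigma>}" for \<nu>
    by blast
  then show ?thesis
    using assms by (auto simp: lin_ext_def odd_card_sym_diff)
qed

lemma lin_ext_eq_iff_sym_diff:
  assumes "finite A" "finite B"
  shows "lin_ext h A = lin_ext h B \<longleftrightarrow> lin_ext h (sym_diff A B) = {}"
  using assms by (auto simp: lin_ext_sym_diff)

lemma lin_ext_diagonal:
  assumes "\<And>\<sigma>. \<sigma> \<in> c \<Longrightarrow> h \<sigma> = (if \<sigma> \<in> C then {\<sigma>} else {})"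
  shows "lin_ext h c = c \<inter> C"
proof -
  have "{\<sigma>\<in>c. \<nu> \<in> h \<sigma>} = (if \<nu> \<in> c \<inter> C then {\<nu>} else {})" for \<nu>
    using assms by (auto split: if_splits)
  then show ?thesis by (auto simp: lin_ext_def)
qed

lemma simplicial_complex_face:
  assumes "simplicial_complex K" "\<sigma> \<in> K" "\<rho> \<noteq> {}" "\<rho> \<subseteq> \<sigma>"
  shows "\<rho> \<in> K"
  using assms unfolding simplicial_complex_def by blast

lemma finite_simplices:
  assumes "simplicial_complex K"
  shows "finite (simplices K p)"
  using assms unfolding simplicial_complex_def simplices_def by simp

lemma free_pair_sdim:
  assumes sc: "simplicial_complex K" and fp: "free_pair K \<sigma> \<tau>"
  shows "sdim \<tau> = sdim \<sigma> + 1"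
proof -
  have "\<sigma> \<subset> \<tau>" "\<sigma> \<in> K" "\<tau> \<in> K" using fp unfolding free_pair_def by auto
  then obtain x where x: "x \<in> \<tau>" "x \<notin> \<sigma>" by blast
  have "insert x \<sigma> \<subseteq> \<tau>" using x \<open>\<sigma> \<subset> \<tau>\<close> by blast
  then have "insert x \<sigma> \<in> K" by (rule simplicial_complex_face[OF sc \<open>\<tau> \<in> K\<close>, rotated]) simp
  moreover have "\<sigma> \<subseteq> insert x \<sigma>" "insert x \<sigma> \<noteq> \<sigma>" using x by auto
  ultimately have "insert x \<sigma> = \<tau>" using fp unfolding free_pair_def by blast
  moreover have "finite \<sigma>" using sc \<open>\<sigma> \<in> K\<close> unfolding simplicial_complex_def by blast
  ultimately show ?thesis using x(2) unfolding sdim_def by auto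
qed

lemma morse_sequence_step:
  assumes "morse_sequence K Ks" "i < length Ks - 1"
  shows "Ks ! i \<subseteq> Ks ! Suc i" "simplicial_complex (Ks ! Suc i)"
  using assms unfolding morse_sequence_def elem_filling_def elem_expansion_def by blast+

lemma morse_sequence_mono:
  assumes "morse_sequence K Ks" "a \<le> b" "b < length Ks"
  shows "Ks ! a \<subseteq> Ks ! b"
  using lift_Suc_mono_le_ivl[of "{..<length Ks - 1}" "(!) Ks"] morse_sequence_step(1)[OF assms(1)]
    assms(2,3) by fastforce

lemma morse_sequence_last:
  assumes "morse_sequence K Ks"
  shows "K = Ks ! (length Ks - 1)"
  using assms last_conv_nth[of Ks] unfolding morse_sequence_def by auto

lemma morse_sequence_nth_subset:
  assumes "morse_sequence K Ks" "a < length Ks"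
  shows "Ks ! a \<subseteq> K"
  using morse_sequence_mono[OF assms(1), of a "length Ks - 1"] morse_sequence_last[OF assms(1)] assms(2)
  by simp

lemma morse_sequence_simplicial_complex:
  assumes "morse_sequence K Ks"
  shows "simplicial_complex K"
proof (cases "length Ks - 1")
  case 0
  have "K = Ks ! 0" using morse_sequence_last[OF assms] 0 by simp
  also have "\<dots> = {}" using assms hd_conv_nth[of Ks] unfolding morse_sequence_def by simp
  finally show ?thesis unfolding simplicial_complex_def by simp
next
  case (Suc i)
  then show ?thesis using morse_sequence_step(2)[OF assms, of i] morse_sequence_last[OF assms] by simp
qed

lemma morse_sequence_nth_cover:
  assumes "morse_sequence K Ks" "n < length Ks"
  shows "Ks ! n \<subseteq> critical Ks \<union> lower_regular Ks \<union> upper_regular Ks"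
  using assms(2)
proof (induction n)
  case 0
  then show ?case using assms(1) hd_conv_nth[of Ks] unfolding morse_sequence_def by simp
next
  case (Suc n)
  then have n: "n < length Ks - 1" by simp
  then consider \<nu> where "elem_filling (Ks ! n) (Ks ! Suc n) \<nu>"
    | \<sigma> \<tau> where "elem_expansion (Ks ! n) (Ks ! Suc n) \<sigma> \<tau>"
    using assms(1) unfolding morse_sequence_def by blast
  then show ?case
  proof cases
    case 1
    then have "Ks ! Suc n \<subseteq> insert \<nu> (Ks ! n)" "\<nu> \<in> critical Ks"
      using n unfolding elem_filling_def critical_def by auto
    then show ?thesis using Suc by auto
  next
    case 2
    then have "Ks ! Suc n \<subseteq> Ks ! n \<union> {\<sigma>, \<tau>}" "\<sigma> \<in> lower_regular Ks" "\<tau> \<in> upper_regular Ks"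
      using n unfolding elem_expansion_def lower_regular_def upper_regular_def by auto
    then show ?thesis using Suc by auto
  qed
qed

lemma morse_sequence_cover:
  assumes "morse_sequence K Ks"
  shows "K \<subseteq> critical Ks \<union> lower_regular Ks \<union> upper_regular Ks"
  using morse_sequence_nth_cover[OF assms, of "length Ks - 1"] morse_sequence_last[OF assms] assms
  unfolding morse_sequence_def by simp

lemma reference_map_diagonal:
  assumes "is_reference_map K Ks f" "\<sigma> \<in> critical Ks \<union> upper_regular Ks"
  shows "f \<sigma> = (if \<sigma> \<in> critical Ks then {\<sigma>} else {})"
  using assms unfolding is_reference_map_def by auto

lemma coreference_map_diagonal:
  assumes "is_coreference_map K Ks g" "\<sigma> \<in> critical Ks \<union> lower_regular Ks"
  shows "g \<sigma> = (if \<sigma> \<in> critical Ks then {\<sigma>} else {})"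
  using assms unfolding is_coreference_map_def by auto

lemma simplices_inter_W_plus:
  "simplices K p \<inter> W_plus Ks p \<subseteq> critical Ks \<union> upper_regular Ks"
  unfolding simplices_def W_plus_def by auto

lemma simplices_diff_W_minus:
  assumes "morse_sequence K Ks"
  shows "simplices K p - W_minus Ks p \<subseteq> critical Ks \<union> lower_regular Ks"
  using morse_sequence_cover[OF assms] unfolding simplices_def W_minus_def by auto

text \<open>Of the upper regular simplices in \<open>c\<close>, take the one added last, \<open>\<tau>\<close>, with free face \<open>\<sigma>\<close>:
  every other simplex of \<open>c\<close> is already present when \<open>\<tau>\<close> is added, so by freeness \<open>\<tau>\<close> is
  the only coface of \<open>\<sigma>\<close> in \<open>c\<close>, and \<open>\<sigma>\<close> survives in the boundary of \<open>c\<close>.\<close>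

lemma upper_regular_cycle_empty:
  assumes ms: "morse_sequence K Ks" and "c \<subseteq> upper_regular Ks"
    and cycle: "lin_ext (bdry K) c = {}"
  shows "c = {}"
proof (rule ccontr)
  assume "c \<noteq> {}"
  define S where "S = {j. j < length Ks - 1 \<and> (\<exists>\<sigma> \<tau>. \<tau> \<in> c \<and> elem_expansion (Ks ! j) (Ks ! Suc j) \<sigma> \<tau>)}"
  have "S \<noteq> {}" using \<open>c \<noteq> {}\<close> \<open>c \<subseteq> upper_regular Ks\<close> unfolding S_def upper_regular_def by blast
  moreover have "finite S" unfolding S_def by simp
  ultimately have "Max S \<in> S" and last: "\<And>j. j \<in> S \<Longrightarrow> j \<le> Max S" by auto
  then obtain i \<sigma> \<tau> where "i = Max S" "i < length Ks - 1" "\<tau> \<in> c"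
    and exp: "elem_expansion (Ks ! i) (Ks ! Suc i) \<sigma> \<tau>"
    unfolding S_def by blast
  have sc: "simplicial_complex (Ks ! Suc i)" and fp: "free_pair (Ks ! Suc i) \<sigma> \<tau>"
    using exp unfolding elem_expansion_def by auto
  have "Ks ! Suc i \<subseteq> K" using morse_sequence_nth_subset[OF ms] \<open>i < length Ks - 1\<close> by simp
  then have "\<sigma> \<in> bdry K \<tau>"
    using free_pair_sdim[OF sc fp] fp unfolding bdry_def free_pair_def by auto
  have "\<rho> = \<tau>" if "\<rho> \<in> c" and face: "\<sigma> \<in> bdry K \<rho>" for \<rho>
  proof -
    obtain j \<sigma>' where j: "j < length Ks - 1" "elem_expansion (Ks ! j) (Ks ! Suc j) \<sigma>' \<rho>"
      using \<open>\<rho> \<in> c\<close> \<open>c \<subseteq> upper_regular Ks\<close> unfolding upper_regular_def by blast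
    then have "j \<in> S" using \<open>\<rho> \<in> c\<close> unfolding S_def by blast
    then have "Ks ! Suc j \<subseteq> Ks ! Suc i"
      using morse_sequence_mono[OF ms] last \<open>i = Max S\<close> \<open>i < length Ks - 1\<close> by simp
    moreover have "\<rho> \<in> Ks ! Suc j" using j(2) unfolding elem_expansion_def free_pair_def by simp
    moreover have "\<sigma> \<subset> \<rho>" using face unfolding bdry_def by simp
    ultimately show "\<rho> = \<tau>" using fp unfolding free_pair_def by blast
  qed
  then have "{\<rho>\<in>c. \<sigma> \<in> bdry K \<rho>} = {\<tau>}" using \<open>\<tau> \<in> c\<close> \<open>\<sigma> \<in> bdry K \<tau>\<close> by blast
  then have "\<sigma> \<in> lin_ext (bdry K) c" unfolding lin_ext_def by simp
  then show False using cycle by simp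
qed

text \<open>Dually, take the lower regular simplex \<open>\<sigma>\<in>c\<close> added first, with partner \<open>\<tau>\<close>: any other
  facet of \<open>\<tau>\<close> lies in the complex before \<open>\<sigma>\<close> is added, hence is not in \<open>c\<close>.\<close>

lemma lower_regular_cocycle_empty:
  assumes ms: "morse_sequence K Ks" and "c \<subseteq> lower_regular Ks"
    and cocycle: "lin_ext (cobdry K) c = {}"
  shows "c = {}"
proof (rule ccontr)
  assume "c \<noteq> {}"
  define S where "S = {j. j < length Ks - 1 \<and> (\<exists>\<sigma> \<tau>. \<sigma> \<in> c \<and> elem_expansion (Ks ! j) (Ks ! Suc j) \<sigma> \<tau>)}"
  have "S \<noteq> {}" using \<open>c \<noteq> {}\<close> \<open>c \<subseteq> lower_regular Ks\<close> unfolding S_def lower_regular_def by blast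
  moreover have "finite S" unfolding S_def by simp
  ultimately have "Min S \<in> S" and first: "\<And>j. j \<in> S \<Longrightarrow> Min S \<le> j" by auto
  then obtain i \<sigma> \<tau> where "i = Min S" "i < length Ks - 1" "\<sigma> \<in> c"
    and exp: "elem_expansion (Ks ! i) (Ks ! Suc i) \<sigma> \<tau>"
    unfolding S_def by blast
  have sc: "simplicial_complex (Ks ! Suc i)" and fp: "free_pair (Ks ! Suc i) \<sigma> \<tau>"
    and step: "Ks ! i = Ks ! Suc i - {\<sigma>, \<tau>}"
    using exp unfolding elem_expansion_def by auto
  have "Ks ! Suc i \<subseteq> K" using morse_sequence_nth_subset[OF ms] \<open>i < length Ks - 1\<close> by simp
  then have "\<tau> \<in> cobdry K \<sigma>"
    using free_pair_sdim[OF sc fp] fp unfolding cobdry_def free_pair_def by auto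
  have "\<rho> = \<sigma>" if "\<rho> \<in> c" and coface: "\<tau> \<in> cobdry K \<rho>" for \<rho>
  proof (rule ccontr)
    assume "\<rho> \<noteq> \<sigma>"
    obtain j \<tau>' where j: "j < length Ks - 1" "elem_expansion (Ks ! j) (Ks ! Suc j) \<rho> \<tau>'"
      using \<open>\<rho> \<in> c\<close> \<open>c \<subseteq> lower_regular Ks\<close> unfolding lower_regular_def by blast
    then have "j \<in> S" using \<open>\<rho> \<in> c\<close> unfolding S_def by blast
    then have "Ks ! i \<subseteq> Ks ! j"
      using morse_sequence_mono[OF ms] first \<open>i = Min S\<close> j(1) by simp
    moreover have "\<rho> \<notin> Ks ! j" using j(2) unfolding elem_expansion_def by simp
    moreover have "\<rho> \<in> Ks ! i"
    proof -
      have "\<rho> \<in> Ks ! Suc j" "simplicial_complex (Ks ! Suc j)"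
        using j(2) unfolding elem_expansion_def free_pair_def by auto
      then have "\<rho> \<noteq> {}" unfolding simplicial_complex_def by blast
      moreover have "\<rho> \<subset> \<tau>" using coface unfolding cobdry_def by simp
      moreover have "\<tau> \<in> Ks ! Suc i" using fp unfolding free_pair_def by simp
      ultimately have "\<rho> \<in> Ks ! Suc i" using simplicial_complex_face[OF sc] by blast
      then show ?thesis using step \<open>\<rho> \<noteq> \<sigma>\<close> \<open>\<rho> \<subset> \<tau>\<close> by blast
    qed
    ultimately show False by blast
  qed
  then have "{\<rho>\<in>c. \<tau> \<in> cobdry K \<rho>} = {\<sigma>}" using \<open>\<sigma> \<in> c\<close> \<open>\<tau> \<in> cobdry K \<sigma>\<close> by blast
  then have "\<tau> \<in> lin_ext (cobdry K) c" unfolding lin_ext_def by simp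
  then show False using cocycle by simp
qed

lemma reference_map_inj_on_W_plus_cycles:
  assumes ms: "morse_sequence K Ks" and ref: "is_reference_map K Ks f"
  shows "inj_on (lin_ext f) (cycles K p \<inter> Pow (W_plus Ks p))"
proof (rule inj_onI)
  fix z z' assume z: "z \<in> cycles K p \<inter> Pow (W_plus Ks p)"
    and z': "z' \<in> cycles K p \<inter> Pow (W_plus Ks p)" and "lin_ext f z = lin_ext f z'"
  define c where "c = sym_diff z z'"
  have "z \<subseteq> simplices K p" "z' \<subseteq> simplices K p" using z z' unfolding cycles_def by auto
  then have fin: "finite z" "finite z'"
    using finite_simplices[OF morse_sequence_simplicial_complex[OF ms]] by (auto intro: finite_subset)
  have c: "c \<subseteq> simplices K p \<inter> W_plus Ks p" using z z' unfolding c_def cycles_def by auto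
  then have c_cr_ur: "c \<subseteq> critical Ks \<union> upper_regular Ks" using simplices_inter_W_plus by blast
  have "lin_ext (bdry K) z = lin_ext (bdry K) z'" using z z' unfolding cycles_def by simp
  then have "lin_ext (bdry K) c = {}" using lin_ext_eq_iff_sym_diff[OF fin] unfolding c_def by blast
  have "lin_ext f c = c \<inter> critical Ks"
    using reference_map_diagonal[OF ref] c_cr_ur by (intro lin_ext_diagonal) blast
  moreover have "lin_ext f c = {}"
    using \<open>lin_ext f z = lin_ext f z'\<close> lin_ext_eq_iff_sym_diff[OF fin] unfolding c_def by blast
  ultimately have "c \<subseteq> upper_regular Ks" using c_cr_ur by blast
  then have "c = {}" using upper_regular_cycle_empty[OF ms] \<open>lin_ext (bdry K) c = {}\<close> by blast
  then show "z = z'" unfolding c_def by blast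
qed

lemma coreference_map_inj_on_cocycles_outside_W_minus:
  assumes ms: "morse_sequence K Ks" and coref: "is_coreference_map K Ks g"
  shows "inj_on (lin_ext g) (cocycles K p \<inter> Pow (K - W_minus Ks p))"
proof (rule inj_onI)
  fix z z' assume z: "z \<in> cocycles K p \<inter> Pow (K - W_minus Ks p)"
    and z': "z' \<in> cocycles K p \<inter> Pow (K - W_minus Ks p)" and "lin_ext g z = lin_ext g z'"
  define c where "c = sym_diff z z'"
  have "z \<subseteq> simplices K p" "z' \<subseteq> simplices K p" using z z' unfolding cocycles_def by auto
  then have fin: "finite z" "finite z'"
    using finite_simplices[OF morse_sequence_simplicial_complex[OF ms]] by (auto intro: finite_subset)
  have c: "c \<subseteq> simplices K p - W_minus Ks p" using z z' unfolding c_def cocycles_def by auto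
  then have c_cr_lr: "c \<subseteq> critical Ks \<union> lower_regular Ks" using simplices_diff_W_minus[OF ms] by blast
  have "lin_ext (cobdry K) z = lin_ext (cobdry K) z'" using z z' unfolding cocycles_def by simp
  then have "lin_ext (cobdry K) c = {}" using lin_ext_eq_iff_sym_diff[OF fin] unfolding c_def by blast
  have "lin_ext g c = c \<inter> critical Ks"
    using coreference_map_diagonal[OF coref] c_cr_lr by (intro lin_ext_diagonal) blast
  moreover have "lin_ext g c = {}"
    using \<open>lin_ext g z = lin_ext g z'\<close> lin_ext_eq_iff_sym_diff[OF fin] unfolding c_def by blast
  ultimately have "c \<subseteq> lower_regular Ks" using c_cr_lr by blast
  then have "c = {}" using lower_regular_cocycle_empty[OF ms] \<open>lin_ext (cobdry K) c = {}\<close> by blast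
  then show "z = z'" unfolding c_def by blast
qed

theorem theorem7:
  fixes K :: "'v set set" and Ks :: "'v set set list"
    and f g :: "'v set \<Rightarrow> 'v set set" and p :: int
  assumes "morse_sequence K Ks"
    and "is_reference_map K Ks f"
    and "is_coreference_map K Ks g"
  shows "(\<forall>z z'. z \<in> cycles K p \<and> z' \<in> cycles K p \<and> lin_ext f z = lin_ext f z' \<and>
            z \<subseteq> W_plus Ks p \<and> z' \<subseteq> W_plus Ks p \<longrightarrow> z = z') \<and>
         (\<forall>z z'. z \<in> cocycles K p \<and> z' \<in> cocycles K p \<and> lin_ext g z = lin_ext g z' \<and>
            z \<subseteq> K - W_minus Ks p \<and> z' \<subseteq> K - W_minus Ks p \<longrightarrow> z = z')"
proof (intro conjI allI impI)
  fix z z'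
  show "z = z'" if "z \<in> cycles K p \<and> z' \<in> cycles K p \<and> lin_ext f z = lin_ext f z' \<and>
            z \<subseteq> W_plus Ks p \<and> z' \<subseteq> W_plus Ks p"
    using that inj_onD[OF reference_map_inj_on_W_plus_cycles[OF assms(1,2), of p]] by blast
  show "z = z'" if "z \<in> cocycles K p \<and> z' \<in> cocycles K p \<and> lin_ext g z = lin_ext g z' \<and>
            z \<subseteq> K - W_minus Ks p \<and> z' \<subseteq> K - W_minus Ks p"
    using that inj_onD[OF coreference_map_inj_on_cocycles_outside_W_minus[OF assms(1,3), of p]] by blast
qed

end
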